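(* In the model described in the context, suppose $\triangle C>0$, and let $X(0)$ be the set of symmetric Stackelberg equilibria. Let $\zeta_1=(M+1)\triangle C+\min\big(MN\triangle C,\ MNk+2M\sqrt{Nk\triangle C}\big)$. Then there exists $x\in X(0)$ with $y_j(\mathbf0,x\mathbf1)=0$ if and only if $\alpha_x\le\zeta_1$. Furthermore, such an $x$ is given by \[x=\begin{cases}\frac1{M+1}\alpha_x,&\text{if }0\le\alpha_x<(M+1)\triangle C,\\ \frac1M(\alpha_x-\triangle C),&\text{if }(M+1)\triangle C\le\alpha_x\le\zeta_1.\end{cases}\]
   Context: Model: $M\ge1$ leaders and $N\ge2$ followers; inverse demand $P(q)=\alpha-\beta q$, $\alpha,\beta>0$; leader marginal cost $C$, follower marginal cost $c$, $c\ge C>0$; follower capacity $k>0$. Leader $i$ produces $x_i\ge0$; follower $j$ has forward position $f_j\in\mathbb{R}$ and chooses spot production $y_j\in[0,k]$. Given $\mathbf f,\mathbf x$, the spot market is the game among followers where follower $j$ chooses $y_j\in[0,k]$ to maximize $P(\sum_ix_i+\sum_{j'}y_{j'})(y_j-f_j)-cy_j$; its unique Nash equilibrium is $\mathbf y(\mathbf f,\mathbf x)=(y_1(\mathbf f,\mathbf x),\dots,y_N(\mathbf f,\mathbf x))$. Leader $i$'s payoff is $\psi_i=(P(\sum_ix_i+\sum_{j'}y_{j'}(\mathbf f,\mathbf x))-C)x_i$; $\psi_i(\bar x;x\mathbf1,\mathbf f)$ denotes this payoff when leader $i$ produces $\bar x$ and all other leaders produce $x$. $X(0)=\{x\in\mathbb{R}_+:\psi_i(x;x\mathbf1,\mathbf0)\ge\psi_i(\bar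 x;x\mathbf1,\mathbf0)\ \forall\bar x\in\mathbb{R}_+,\ \forall i\}$. $\alpha_x=(\alpha-C)/\beta$, $\triangle C=(c-C)/\beta$. *)

theory Defs
  imports Complex_Main
begin

definition price :: "real \<Rightarrow> real \<Rightarrow> real \<Rightarrow> real" where
  "price \<alpha> \<beta> q = \<alpha> - \<beta> * q"

definition follower_payoff ::
  "real \<Rightarrow> real \<Rightarrow> real \<Rightarrow> nat \<Rightarrow> (nat \<Rightarrow> real) \<Rightarrow> real \<Rightarrow> (nat \<Rightarrow> real) \<Rightarrow> nat \<Rightarrow> real" where
  "follower_payoff \<alpha> \<beta> c N f Xtot y j =
     price \<alpha> \<beta> (Xtot + (\<Sum>j'<N. y j')) * (y j - f j) - c * y j"

text \<open>Nash equilibrium of the spot market (entries beyond N fixed to 0 for uniqueness of representation).\<close>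
definition spot_NE ::
  "real \<Rightarrow> real \<Rightarrow> real \<Rightarrow> real \<Rightarrow> nat \<Rightarrow> (nat \<Rightarrow> real) \<Rightarrow> real \<Rightarrow> (nat \<Rightarrow> real) \<Rightarrow> bool" where
  "spot_NE \<alpha> \<beta> c k N f Xtot y \<longleftrightarrow>
     (\<forall>j. N \<le> j \<longrightarrow> y j = 0) \<and>
     (\<forall>j<N. 0 \<le> y j \<and> y j \<le> k \<and>
        (\<forall>yj. 0 \<le> yj \<and> yj \<le> k \<longrightarrow>
           follower_payoff \<alpha> \<beta> c N f Xtot (y(j := yj)) j \<le> follower_payoff \<alpha> \<beta> c N f Xtot y j))"

definition spot_eq ::
  "real \<Rightarrow> real \<Rightarrow> real \<Rightarrow> real \<Rightarrow> nat \<Rightarrow> nat \<Rightarrow> (nat \<Rightarrow> real) \<Rightarrow> (nat \<Rightarrow> real) \<Rightarrow> (nat \<Rightarrow> real)" where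
  "spot_eq \<alpha> \<beta> c k M N f x = (THE y. spot_NE \<alpha> \<beta> c k N f (\<Sum>i<M. x i) y)"

definition leader_payoff ::
  "real \<Rightarrow> real \<Rightarrow> real \<Rightarrow> real \<Rightarrow> real \<Rightarrow> nat \<Rightarrow> nat \<Rightarrow> (nat \<Rightarrow> real) \<Rightarrow> (nat \<Rightarrow> real) \<Rightarrow> nat \<Rightarrow> real" where
  "leader_payoff \<alpha> \<beta> C c k M N f x i =
     (price \<alpha> \<beta> ((\<Sum>i'<M. x i') + (\<Sum>j<N. spot_eq \<alpha> \<beta> c k M N f x j)) - C) * x i"

text \<open>X(0): symmetric Stackelberg equilibria with zero forward positions.
  psi_i(xb; x1, 0) is leader_payoff with profile (\<lambda>_. x)(i := xb).\<close>
definition X0 ::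
  "real \<Rightarrow> real \<Rightarrow> real \<Rightarrow> real \<Rightarrow> real \<Rightarrow> nat \<Rightarrow> nat \<Rightarrow> real set" where
  "X0 \<alpha> \<beta> C c k M N =
     {x. 0 \<le> x \<and> (\<forall>i<M. \<forall>xb. 0 \<le> xb \<longrightarrow>
        leader_payoff \<alpha> \<beta> C c k M N (\<lambda>_. 0) ((\<lambda>_. x)(i := xb)) i
          \<le> leader_payoff \<alpha> \<beta> C c k M N (\<lambda>_. 0) (\<lambda>_. x) i)}"

end

theory Submission
  imports Defs
begin

(*
  With zero forward positions the spot market has a unique equilibrium; it is symmetric, each
  follower producing (alpha_x - dC - X)/(N+1) clamped to [0,k], where X is the total leader
  output. Against rivals producing x, a leader's payoff is therefore beta times an explicit
  piecewise quadratic function of its own output t, and the followers are idle at a symmetric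
  optimum x exactly when alpha_x - dC <= M x.
  If this inequality is strict, x is an interior maximiser of a parabola, which forces
  x = alpha_x/(M+1) and alpha_x < (M+1) dC. If it is an equality, then x = (alpha_x - dC)/M, and
  x is optimal iff no lower output t pays: undercutting into the followers' linear regime does
  not pay iff alpha_x - (M+1) dC <= M N dC, and undercutting into their capacity regime does not
  pay iff alpha_x - (M+1) dC <= M N k + 2 M sqrt(N k dC).
*)

lemma exists_small_gain:
  fixes \<beta> D h :: real
  assumes "0 < \<beta>" and "0 < D" and "0 < h"
  shows "\<exists>e. 0 < e \<and> e \<le> h \<and> 0 < e * D - \<beta> * e^2"
proof (intro exI conjI)
  define e where "e = min h (D / (2 * \<beta>))"
  show "0 < e" "e \<le> h" using assms by (simp_all add: e_def)
  have "e \<le> D / (2 * \<beta>)" by (simp add: e_def)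
  hence "\<beta> * e * 2 \<le> D" using assms(1) by (simp add: pos_le_divide_eq algebra_simps)
  hence "e * (\<beta> * e * 2) \<le> e * D" using \<open>0 < e\<close> by simp
  moreover have "0 < \<beta> * e^2" using assms(1) \<open>0 < e\<close> by simp
  ultimately show "0 < e * D - \<beta> * e^2" by (simp add: power2_eq_square algebra_simps)
qed

lemma quadratic_maximizer_iff:
  fixes \<beta> E k y :: real
  assumes "0 < \<beta>" and "0 \<le> y" and "y \<le> k"
  shows "(\<forall>z. 0 \<le> z \<and> z \<le> k \<longrightarrow> (E - \<beta> * z) * z \<le> (E - \<beta> * y) * y)
     \<longleftrightarrow> (y < k \<longrightarrow> E \<le> 2 * \<beta> * y) \<and> (0 < y \<longrightarrow> 2 * \<beta> * y \<le> E)"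
proof -
  have gain: "(E - \<beta> * z) * z - (E - \<beta> * y) * y = (z - y) * (E - 2 * \<beta> * y) - \<beta> * (z - y)^2"
    for z by (simp add: algebra_simps power2_eq_square)
  show ?thesis
  proof (intro iffI conjI impI allI)
    assume max: "\<forall>z. 0 \<le> z \<and> z \<le> k \<longrightarrow> (E - \<beta> * z) * z \<le> (E - \<beta> * y) * y"
    show "E \<le> 2 * \<beta> * y" if "y < k"
    proof (rule ccontr)
      assume "\<not> E \<le> 2 * \<beta> * y"
      then obtain e where "0 < e" "e \<le> k - y" "0 < e * (E - 2 * \<beta> * y) - \<beta> * e^2"
        using exists_small_gain[OF assms(1), of "E - 2 * \<beta> * y" "k - y"] \<open>y < k\<close> by auto
      thus False using max[rule_format, of "y + e"] gain[of "y + e"] assms(2) by simp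
    qed
    show "2 * \<beta> * y \<le> E" if "0 < y"
    proof (rule ccontr)
      assume "\<not> 2 * \<beta> * y \<le> E"
      then obtain e where "0 < e" "e \<le> y" "0 < e * (2 * \<beta> * y - E) - \<beta> * e^2"
        using exists_small_gain[OF assms(1), of "2 * \<beta> * y - E" y] \<open>0 < y\<close> by auto
      thus False using max[rule_format, of "y - e"] gain[of "y - e"] assms(3)
        by (simp add: algebra_simps power2_eq_square)
    qed
  next
    fix z assume kkt: "(y < k \<longrightarrow> E \<le> 2 * \<beta> * y) \<and> (0 < y \<longrightarrow> 2 * \<beta> * y \<le> E)"
      and z: "0 \<le> z \<and> z \<le> k"
    have "(z - y) * (E - 2 * \<beta> * y) \<le> 0"
      using kkt z assms by (cases "z \<le> y") (auto simp: mult_le_0_iff)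
    thus "(E - \<beta> * z) * z \<le> (E - \<beta> * y) * y"
      using gain[of z] assms(1) by (smt (verit) zero_le_power2 mult_nonneg_nonneg)
  qed
qed

lemma parabola_vertex_eq:
  fixes l p x :: real
  assumes "l < x" and max: "\<And>t. l \<le> t \<Longrightarrow> t * (2 * p - t) \<le> x * (2 * p - x)"
  shows "x = p"
proof (rule ccontr)
  assume "x \<noteq> p"
  \<comment> \<open>Moving from \<open>x\<close> towards the vertex \<open>p\<close>, without leaving \<open>[l, \<infinity>)\<close>, is profitable.\<close>
  define t where "t = max l p"
  have "l \<le> t" "t < x \<or> p = t" "p \<le> t" using assms(1) by (auto simp: t_def)
  moreover have "t * (2 * p - t) - x * (2 * p - x) = (x - t) * (t + x - 2 * p)"
    by (simp add: algebra_simps)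
  moreover have "0 < (x - t) * (t + x - 2 * p)" if "t < x"
    using that \<open>p \<le> t\<close> by simp
  moreover have "0 < (x - p)^2" using \<open>x \<noteq> p\<close> by simp
  ultimately show False using max[of t] by (auto simp: algebra_simps power2_eq_square)
qed

lemma sqrt_gap_le_iff:
  fixes d x q :: real
  assumes "0 \<le> d" and "d \<le> x" and "0 \<le> q"
  shows "x - d \<le> q + 2 * sqrt (q * d) \<longleftrightarrow> x + d - q \<le> 2 * sqrt (x * d)"
proof -
  define s r p where "s = sqrt x" and "r = sqrt d" and "p = sqrt q"
  have sq: "s^2 = x" "r^2 = d" "p^2 = q" and nonneg: "0 \<le> s" "0 \<le> r" "0 \<le> p" "r \<le> s"
    using assms by (simp_all add: s_def r_def p_def)
  have "x - d \<le> q + 2 * sqrt (q * d) \<longleftrightarrow> s^2 \<le> (p + r)^2"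
    using sq by (simp add: p_def r_def real_sqrt_mult power2_sum algebra_simps)
  also have "\<dots> \<longleftrightarrow> s \<le> p + r"
    using nonneg by (simp add: abs_le_square_iff[symmetric] del: abs_le_square_iff)
  also have "\<dots> \<longleftrightarrow> s - r \<le> p" by linarith
  also have "\<dots> \<longleftrightarrow> (s - r)^2 \<le> p^2"
    using nonneg by (simp add: abs_le_square_iff[symmetric] del: abs_le_square_iff)
  also have "\<dots> \<longleftrightarrow> x + d - q \<le> 2 * sqrt (x * d)"
    using sq by (simp add: s_def r_def real_sqrt_mult power2_diff algebra_simps)
  finally show ?thesis .
qed

lemma sum_fun_upd:
  fixes y :: "nat \<Rightarrow> real"
  assumes "j < N"
  shows "(\<Sum>j'<N. (y(j := z)) j') = (\<Sum>j'<N. y j') - y j + z"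
proof -
  have "(\<Sum>j'\<in>{..<N} - {j}. (y(j := z)) j') = (\<Sum>j'\<in>{..<N} - {j}. y j')"
    by (rule sum.cong) auto
  thus ?thesis using assms by (simp add: sum.remove[of "{..<N}" j])
qed

definition clamp :: "real \<Rightarrow> real \<Rightarrow> real" where
  "clamp k v = max 0 (min v k)"

lemma clamp_nonneg: "0 \<le> k \<Longrightarrow> 0 \<le> clamp k v"
  and clamp_le: "0 \<le> k \<Longrightarrow> clamp k v \<le> k"
  unfolding clamp_def by auto

lemma clamp_eq_0_iff: "0 < k \<Longrightarrow> clamp k v = 0 \<longleftrightarrow> v \<le> 0"
  unfolding clamp_def by auto

lemma clamp_eq_iff:
  assumes "0 \<le> q" and "q \<le> k"
  shows "q = clamp k v \<longleftrightarrow> (q < k \<longrightarrow> v \<le> q) \<and> (0 < q \<longrightarrow> q \<le> v)"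
  using assms unfolding clamp_def by (auto simp: max_def min_def)

lemma follower_payoff_no_forward:
  assumes "j < N"
  shows "follower_payoff \<alpha> \<beta> c N (\<lambda>_. 0) X (y(j := z)) j
       = (\<alpha> - c - \<beta> * X - \<beta> * ((\<Sum>j'<N. y j') - y j) - \<beta> * z) * z"
  unfolding follower_payoff_def price_def sum_fun_upd[OF assms] by (simp add: algebra_simps)

lemma spot_NE_no_forward_iff:
  assumes "0 < \<beta>"
  shows "spot_NE \<alpha> \<beta> c k N (\<lambda>_. 0) X y \<longleftrightarrow>
    (\<forall>j. N \<le> j \<longrightarrow> y j = 0) \<and>
    (\<forall>j<N. 0 \<le> y j \<and> y j \<le> k \<and>
       (y j < k \<longrightarrow> \<alpha> - c - \<beta> * X \<le> \<beta> * ((\<Sum>j'<N. y j') + y j)) \<and>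
       (0 < y j \<longrightarrow> \<beta> * ((\<Sum>j'<N. y j') + y j) \<le> \<alpha> - c - \<beta> * X))"
proof -
  have "(\<forall>z. 0 \<le> z \<and> z \<le> k \<longrightarrow> follower_payoff \<alpha> \<beta> c N (\<lambda>_. 0) X (y(j := z)) j
                                    \<le> follower_payoff \<alpha> \<beta> c N (\<lambda>_. 0) X y j)
    \<longleftrightarrow> (y j < k \<longrightarrow> \<alpha> - c - \<beta> * X \<le> \<beta> * ((\<Sum>j'<N. y j') + y j)) \<and>
        (0 < y j \<longrightarrow> \<beta> * ((\<Sum>j'<N. y j') + y j) \<le> \<alpha> - c - \<beta> * X)"
    if "j < N" "0 \<le> y j" "y j \<le> k" for j
  proof -
    define E where "E = \<alpha> - c - \<beta> * X - \<beta> * ((\<Sum>j'<N. y j') - y j)"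
    have payoff: "follower_payoff \<alpha> \<beta> c N (\<lambda>_. 0) X (y(j := z)) j = (E - \<beta> * z) * z" for z
      unfolding E_def by (rule follower_payoff_no_forward[OF that(1)])
    have "follower_payoff \<alpha> \<beta> c N (\<lambda>_. 0) X y j = (E - \<beta> * y j) * y j"
      using payoff[of "y j"] by simp
    moreover have "E \<le> 2 * \<beta> * y j \<longleftrightarrow> \<alpha> - c - \<beta> * X \<le> \<beta> * ((\<Sum>j'<N. y j') + y j)"
      and "2 * \<beta> * y j \<le> E \<longleftrightarrow> \<beta> * ((\<Sum>j'<N. y j') + y j) \<le> \<alpha> - c - \<beta> * X"
      unfolding E_def by (simp_all add: algebra_simps)
    ultimately show ?thesis
      unfolding payoff using quadratic_maximizer_iff[OF assms that(2,3), of E] by simp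
  qed
  thus ?thesis unfolding spot_NE_def by blast
qed

lemma symmetric_kkt_iff_clamp:
  fixes \<beta> G k q :: real
  assumes "0 < \<beta>" and "0 \<le> q" and "q \<le> k"
  shows "(q < k \<longrightarrow> G \<le> \<beta> * (real N * q + q)) \<and> (0 < q \<longrightarrow> \<beta> * (real N * q + q) \<le> G)
     \<longleftrightarrow> q = clamp k (G / ((real N + 1) * \<beta>))"
proof -
  define g where "g = G / ((real N + 1) * \<beta>)"
  have "(real N + 1) * \<beta> \<noteq> 0" using assms(1) by simp
  hence "G = (real N + 1) * \<beta> * g" by (simp add: g_def)
  hence "G = \<beta> * (real N * q + q) + (real N + 1) * \<beta> * (g - q)" by (simp add: algebra_simps)
  hence "(q < k \<longrightarrow> G \<le> \<beta> * (real N * q + q)) \<and> (0 < q \<longrightarrow> \<beta> * (real N * q + q) \<le> G)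
     \<longleftrightarrow> (q < k \<longrightarrow> g \<le> q) \<and> (0 < q \<longrightarrow> q \<le> g)"
    using assms(1) by (auto simp: mult_le_0_iff zero_le_mult_iff)
  thus ?thesis unfolding g_def[symmetric] using clamp_eq_iff[OF assms(2,3)] by blast
qed

lemma spot_NE_symmetric:
  fixes \<alpha> \<beta> c k X :: real
  assumes "0 < \<beta>" and "0 \<le> k"
  shows "spot_NE \<alpha> \<beta> c k N (\<lambda>_. 0) X
           (\<lambda>j. if j < N then clamp k ((\<alpha> - c - \<beta> * X) / ((real N + 1) * \<beta>)) else 0)"
proof -
  define q where "q = clamp k ((\<alpha> - c - \<beta> * X) / ((real N + 1) * \<beta>))"
  have q: "0 \<le> q" "q \<le> k" using assms(2) by (simp_all add: q_def clamp_nonneg clamp_le)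
  thus ?thesis
    using symmetric_kkt_iff_clamp[OF assms(1) q, of "\<alpha> - c - \<beta> * X" N]
    unfolding spot_NE_no_forward_iff[OF assms(1)] q_def[symmetric] by simp
qed

lemma spot_NE_unique:
  fixes \<alpha> \<beta> c k X :: real
  assumes "0 < \<beta>" and "spot_NE \<alpha> \<beta> c k N (\<lambda>_. 0) X y"
  shows "y = (\<lambda>j. if j < N then clamp k ((\<alpha> - c - \<beta> * X) / ((real N + 1) * \<beta>)) else 0)"
proof -
  define Y where "Y = (\<Sum>j'<N. y j')"
  note NE = assms(2)[unfolded spot_NE_no_forward_iff[OF assms(1)], folded Y_def]
  have not_less: "\<not> y j < y l" if "j < N" "l < N" for j l
  proof
    \<comment> \<open>Otherwise follower \<open>j\<close> would like to produce more and follower \<open>l\<close> less.\<close>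
    assume less: "y j < y l"
    moreover have "0 \<le> y j" "y l \<le> k" using NE that by auto
    ultimately have "y j < k" "0 < y l" by auto
    hence "\<beta> * (Y + y l) \<le> \<alpha> - c - \<beta> * X" "\<alpha> - c - \<beta> * X \<le> \<beta> * (Y + y j)"
      using NE that by blast+
    hence "\<beta> * (Y + y l) \<le> \<beta> * (Y + y j)" by linarith
    thus False using less assms(1) by simp
  qed
  show ?thesis
  proof (cases "N = 0")
    case True
    thus ?thesis using NE by auto
  next
    case False
    define q where "q = y 0"
    have yq: "y j = q" if "j < N" for j
      using not_less[OF that, of 0] not_less[OF _ that, of 0] False by (simp add: q_def)
    have "Y = real N * q" unfolding Y_def using yq by simp
    hence "q = clamp k ((\<alpha> - c - \<beta> * X) / ((real N + 1) * \<beta>))"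
      using NE False symmetric_kkt_iff_clamp[OF assms(1), of q k "\<alpha> - c - \<beta> * X" N]
      by (simp add: q_def)
    thus ?thesis using yq NE by (auto simp: fun_eq_iff)
  qed
qed

lemma spot_eq_no_forward:
  assumes "0 < \<beta>" and "0 \<le> k"
  shows "spot_eq \<alpha> \<beta> c k M N (\<lambda>_. 0) x = (\<lambda>j. if j < N
           then clamp k ((\<alpha> - c - \<beta> * (\<Sum>i<M. x i)) / ((real N + 1) * \<beta>)) else 0)"
  unfolding spot_eq_def
  by (rule the_equality) (simp_all add: spot_NE_symmetric[OF assms] spot_NE_unique[OF assms(1)])

text \<open>The payoff of a leader producing \<open>t\<close> while the other \<open>m - 1\<close> leaders produce \<open>x\<close>,
  divided by \<open>\<beta>\<close>; here \<open>a\<close> and \<open>d\<close> stand for \<open>\<alpha>\<^sub>x\<close> and \<open>\<triangle>C\<close>.\<close>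
definition deviation_profit :: "real \<Rightarrow> real \<Rightarrow> real \<Rightarrow> real \<Rightarrow> real \<Rightarrow> real \<Rightarrow> real \<Rightarrow> real" where
  "deviation_profit a d k m n x t =
     t * (a - (m - 1) * x - t - n * clamp k ((a - d - (m - 1) * x - t) / (n + 1)))"

definition symmetric_optimum :: "real \<Rightarrow> real \<Rightarrow> real \<Rightarrow> real \<Rightarrow> real \<Rightarrow> real \<Rightarrow> bool" where
  "symmetric_optimum a d k m n x \<longleftrightarrow>
     0 \<le> x \<and> (\<forall>t\<ge>0. deviation_profit a d k m n x t \<le> deviation_profit a d k m n x x)"

definition idle_threshold :: "real \<Rightarrow> real \<Rightarrow> real \<Rightarrow> real \<Rightarrow> real" where
  "idle_threshold d k m n = (m + 1) * d + min (m * n * d) (m * n * k + 2 * m * sqrt (n * k * d))"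

lemma leader_payoff_deviation:
  assumes "0 < \<beta>" and "0 \<le> k" and "i < M"
  shows "leader_payoff \<alpha> \<beta> C c k M N (\<lambda>_. 0) ((\<lambda>_. x)(i := t)) i
     = \<beta> * deviation_profit ((\<alpha> - C) / \<beta>) ((c - C) / \<beta>) k (real M) (real N) x t"
proof -
  define X where "X = real M * x - x + t"
  have X: "(\<Sum>i'<M. ((\<lambda>_. x)(i := t)) i') = X"
    unfolding X_def using sum_fun_upd[OF assms(3), of "\<lambda>_. x" t] by simp
  define w where "w = clamp k ((\<alpha> - c - \<beta> * X) / ((real N + 1) * \<beta>))"
  have "(\<alpha> - c - \<beta> * X) / ((real N + 1) * \<beta>)
      = ((\<alpha> - C) / \<beta> - (c - C) / \<beta> - (real M - 1) * x - t) / (real N + 1)"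
    using assms(1) by (simp add: X_def field_simps)
  hence "deviation_profit ((\<alpha> - C) / \<beta>) ((c - C) / \<beta>) k (real M) (real N) x t
       = t * ((\<alpha> - C) / \<beta> - (real M - 1) * x - t - real N * w)"
    by (simp add: deviation_profit_def w_def)
  moreover have "leader_payoff \<alpha> \<beta> C c k M N (\<lambda>_. 0) ((\<lambda>_. x)(i := t)) i
      = (\<alpha> - \<beta> * (X + real N * w) - C) * t"
    unfolding leader_payoff_def spot_eq_no_forward[OF assms(1,2)] X price_def
    using assms(3) by (simp add: w_def)
  ultimately show ?thesis using assms(1) by (simp add: X_def field_simps)
qed

lemma spot_eq_symmetric:
  assumes "0 < \<beta>" and "0 \<le> k" and "j < N"
  shows "spot_eq \<alpha> \<beta> c k M N (\<lambda>_. 0) (\<lambda>_. x) j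
       = clamp k (((\<alpha> - C) / \<beta> - (c - C) / \<beta> - real M * x) / (real N + 1))"
proof -
  have "(\<alpha> - c - \<beta> * (real M * x)) / ((real N + 1) * \<beta>)
      = ((\<alpha> - C) / \<beta> - (c - C) / \<beta> - real M * x) / (real N + 1)"
    using assms(1) by (simp add: field_simps)
  thus ?thesis using assms(3) by (simp add: spot_eq_no_forward[OF assms(1,2)])
qed

lemma spot_eq_symmetric_idle_iff:
  assumes "0 < \<beta>" and "0 < k" and "0 < N"
  shows "(\<forall>j<N. spot_eq \<alpha> \<beta> c k M N (\<lambda>_. 0) (\<lambda>_. x) j = 0)
     \<longleftrightarrow> (\<alpha> - C) / \<beta> - (c - C) / \<beta> \<le> real M * x"
proof -
  define v where "v = (\<alpha> - C) / \<beta> - (c - C) / \<beta> - real M * x"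
  have "\<forall>j<N. spot_eq \<alpha> \<beta> c k M N (\<lambda>_. 0) (\<lambda>_. x) j = clamp k (v / (real N + 1))"
    using spot_eq_symmetric[OF assms(1) less_imp_le[OF assms(2)]] by (simp add: v_def)
  moreover have "clamp k (v / (real N + 1)) = 0 \<longleftrightarrow> v \<le> 0"
    using clamp_eq_0_iff[OF assms(2)] by (simp add: divide_le_0_iff add_pos_nonneg)
  ultimately show ?thesis using assms(3) by (auto simp: v_def)
qed

lemma mem_X0_iff:
  assumes "0 < \<beta>" and "0 \<le> k" and "1 \<le> M"
  shows "x \<in> X0 \<alpha> \<beta> C c k M N
     \<longleftrightarrow> symmetric_optimum ((\<alpha> - C) / \<beta>) ((c - C) / \<beta>) k (real M) (real N) x"
proof -
  have "leader_payoff \<alpha> \<beta> C c k M N (\<lambda>_. 0) ((\<lambda>_. x)(i := t)) i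
      \<le> leader_payoff \<alpha> \<beta> C c k M N (\<lambda>_. 0) (\<lambda>_. x) i
    \<longleftrightarrow> deviation_profit ((\<alpha> - C) / \<beta>) ((c - C) / \<beta>) k (real M) (real N) x t
      \<le> deviation_profit ((\<alpha> - C) / \<beta>) ((c - C) / \<beta>) k (real M) (real N) x x" if "i < M" for i t
    using leader_payoff_deviation[OF assms(1,2) that, of \<alpha> C c N x t]
      leader_payoff_deviation[OF assms(1,2) that, of \<alpha> C c N x x] assms(1)
    by (simp add: fun_upd_idem)
  thus ?thesis using assms(3) unfolding X0_def symmetric_optimum_def by fastforce
qed

lemma deviation_profit_le:
  assumes "0 \<le> k" and "0 \<le> n" and "0 \<le> t"
  shows "deviation_profit a d k m n x t \<le> t * (a - (m - 1) * x - t)"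
  using assms clamp_nonneg[OF assms(1)] by (simp add: deviation_profit_def mult_left_mono)

lemma deviation_profit_idle:
  assumes "0 \<le> n" and "a - d - (m - 1) * x - t \<le> 0"
  shows "deviation_profit a d k m n x t = t * (a - (m - 1) * x - t)"
proof -
  have "(a - d - (m - 1) * x - t) / (n + 1) \<le> 0" using assms by (simp add: divide_nonpos_pos)
  thus ?thesis by (simp add: deviation_profit_def clamp_def)
qed

lemma idle_threshold_ge:
  assumes "0 \<le> d" and "0 \<le> k" and "0 \<le> m" and "0 \<le> n"
  shows "(m + 1) * d \<le> idle_threshold d k m n"
  using assms by (simp add: idle_threshold_def)

definition boundary_profit :: "real \<Rightarrow> real \<Rightarrow> real \<Rightarrow> real \<Rightarrow> real \<Rightarrow> real" where
  "boundary_profit d k n x t = t * (x + d - t - n * clamp k ((x - t) / (n + 1)))"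

lemma deviation_profit_boundary:
  assumes "a = m * x + d"
  shows "deviation_profit a d k m n x t = boundary_profit d k n x t"
  unfolding deviation_profit_def boundary_profit_def assms by (simp add: algebra_simps)

lemma boundary_profit_le:
  fixes d k n x t :: real
  assumes "0 < d" and "0 < n" and "0 < k" and "d \<le> x" and "x \<le> (n + 1) * d"
    and "x + d - n * k \<le> 2 * sqrt (x * d)" and "0 \<le> t"
  shows "boundary_profit d k n x t \<le> x * d"
proof -
  define v where "v = (x - t) / (n + 1)"
  have n1: "0 < n + 1" using assms(2) by simp
  consider "v \<le> 0" | "0 < v" "v \<le> k" | "k < v" by linarith
  thus ?thesis
  proof cases
    case 1
    hence "t * (x + d - t - n * clamp k v) - x * d = (t - x) * (d - t)"
      by (simp add: clamp_def algebra_simps)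
    moreover have "x \<le> t" using 1 n1 by (simp add: v_def divide_le_0_iff)
    moreover have "(t - x) * (d - t) \<le> 0" using \<open>x \<le> t\<close> assms(4) by (simp add: mult_nonneg_nonpos)
    ultimately show ?thesis by (simp add: v_def boundary_profit_def)
  next
    case 2
    hence "t * (x + d - t - n * clamp k v) - x * d = (t - x) * ((n + 1) * d - t) / (n + 1)"
      using n1 by (simp add: clamp_def v_def field_simps)
    moreover have "t < x" using 2 n1 by (simp add: v_def zero_less_divide_iff)
    hence "(t - x) * ((n + 1) * d - t) \<le> 0" using assms(5) by (simp add: mult_nonpos_nonneg)
    hence "(t - x) * ((n + 1) * d - t) / (n + 1) \<le> 0" using n1 by (simp add: divide_nonpos_pos)
    ultimately show ?thesis by (simp add: v_def boundary_profit_def)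
  next
    case 3
    define B where "B = x + d - n * k"
    have "clamp k v = k" using 3 assms(3) by (simp add: clamp_def)
    hence "t * (x + d - t - n * clamp k v) = t * (B - t)" by (simp add: B_def)
    also have "\<dots> \<le> x * d"
    proof (cases "0 \<le> B")
      case True
      have "4 * (t * (B - t)) \<le> B^2" using zero_le_power2[of "B - 2 * t"]
        by (simp add: power2_eq_square algebra_simps)
      also have "\<dots> \<le> (2 * sqrt (x * d))^2"
        using True assms(6) by (intro power_mono) (simp_all add: B_def)
      also have "\<dots> = 4 * (x * d)" using assms(1,4) by (simp add: power_mult_distrib)
      finally show ?thesis by simp
    next
      case False
      hence "t * (B - t) \<le> 0" using assms(7) by (simp add: mult_nonneg_nonpos)
      thus ?thesis using assms(1,4) by (smt (verit) mult_nonneg_nonneg)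
    qed
    finally show ?thesis by (simp add: v_def boundary_profit_def)
  qed
qed

lemma boundary_profit_bounded_capacity:
  fixes d k n x :: real
  assumes "0 < d" and "0 \<le> n" and "0 < k"
    and bounded: "\<And>t. 0 \<le> t \<Longrightarrow> boundary_profit d k n x t \<le> x * d"
  shows "x \<le> (n + 1) * d"
proof (rule ccontr)
  assume above: "\<not> ?thesis"
  have n1: "0 < n + 1" using assms(2) by simp
  \<comment> \<open>Undercutting \<open>x\<close> slightly keeps the followers' response in its linear range and pays.\<close>
  define t where "t = max ((x + (n + 1) * d) / 2) (x - (n + 1) * k)"
  have "(n + 1) * d < (x + (n + 1) * d) / 2" "(x + (n + 1) * d) / 2 < x"
    using above by (simp_all add: field_simps)
  moreover have "0 < (n + 1) * k" using assms(3) n1 by simp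
  ultimately have t: "(n + 1) * d < t" "t < x" unfolding t_def by (simp_all add: less_max_iff_disj)
  have "x - t \<le> (n + 1) * k" by (simp add: t_def)
  hence "clamp k ((x - t) / (n + 1)) = (x - t) / (n + 1)"
    using t n1 by (simp add: clamp_def divide_le_eq mult.commute)
  moreover have "t * (x + d - t - n * ((x - t) / (n + 1))) - x * d = (x - t) * (t - (n + 1) * d) / (n + 1)"
    using n1 by (simp add: field_simps)
  moreover have "0 < (x - t) * (t - (n + 1) * d) / (n + 1)" using t n1 by simp
  moreover have "0 \<le> t" using t assms(1) n1 by (smt (verit) mult_pos_pos)
  ultimately show False using bounded[of t] by (simp add: boundary_profit_def)
qed

lemma boundary_profit_bounded_gap:
  fixes d k n x :: real
  assumes "0 < d" and "1 \<le> n" and "0 < k" and "d \<le> x" and capacity: "x \<le> (n + 1) * d"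
    and bounded: "\<And>t. 0 \<le> t \<Longrightarrow> boundary_profit d k n x t \<le> x * d"
  shows "x + d - n * k \<le> 2 * sqrt (x * d)"
proof (rule ccontr)
  assume gap: "\<not> ?thesis"
  have n1: "0 < n + 1" using assms(2) by simp
  \<comment> \<open>The followers then run at capacity against \<open>t\<close>, the vertex of the resulting parabola.\<close>
  define t where "t = (x + d - n * k) / 2"
  have "0 \<le> sqrt (x * d)" using assms(1,4) by simp
  hence "0 \<le> x + d - n * k" using gap by linarith
  hence t0: "0 \<le> t" by (simp add: t_def)
  have wide: "\<not> x - d \<le> n * k + 2 * sqrt (n * k * d)"
    using sqrt_gap_le_iff[of d x "n * k"] gap assms by simp
  have "n * k < n * d"
  proof -
    have "x - d \<le> n * d" using capacity by (simp add: algebra_simps)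
    moreover have "0 \<le> sqrt (n * k * d)" using assms by simp
    ultimately show ?thesis using wide by linarith
  qed
  hence "k < d" using assms(2) by simp
  have "k * k \<le> 1 * (k * d)" using \<open>k < d\<close> assms(3) by simp
  also have "\<dots> \<le> n * (k * d)" using assms by (intro mult_right_mono) simp_all
  finally have "k * k \<le> n * k * d" by (simp add: mult.assoc)
  hence "k \<le> sqrt (n * k * d)" using assms(3) real_sqrt_le_mono[of "k * k"] by simp
  hence "n * k + 2 * k < x - d" using wide by linarith
  hence "(n + 1) * k \<le> x - t" by (simp add: t_def field_simps)
  hence "clamp k ((x - t) / (n + 1)) = k" using n1 assms(3) by (simp add: clamp_def le_divide_eq mult.commute)
  moreover have "x + d - t - n * k = t" by (simp add: t_def field_simps)
  ultimately have "boundary_profit d k n x t = t * t" by (simp add: boundary_profit_def)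
  moreover have "x * d < t * t"
  proof -
    have "2 * sqrt (x * d) < x + d - n * k" using gap by simp
    hence "(2 * sqrt (x * d))^2 < (x + d - n * k)^2"
      using \<open>0 \<le> sqrt (x * d)\<close> by (intro power_strict_mono) simp_all
    thus ?thesis using assms(1,4) by (simp add: t_def power_mult_distrib power2_eq_square field_simps)
  qed
  ultimately show False using bounded[OF t0] by linarith
qed

lemma boundary_profit_bounded_iff:
  fixes d k n x :: real
  assumes "0 < d" and "1 \<le> n" and "0 < k" and "d \<le> x"
  shows "(\<forall>t\<ge>0. boundary_profit d k n x t \<le> x * d)
     \<longleftrightarrow> x - d \<le> n * d \<and> x - d \<le> n * k + 2 * sqrt (n * k * d)"
proof -
  have "x - d \<le> n * k + 2 * sqrt (n * k * d) \<longleftrightarrow> x + d - n * k \<le> 2 * sqrt (x * d)"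
    using assms by (intro sqrt_gap_le_iff) simp_all
  moreover have "x - d \<le> n * d \<longleftrightarrow> x \<le> (n + 1) * d" by (simp add: algebra_simps)
  moreover have "0 < n" "0 \<le> n" using assms(2) by simp_all
  ultimately show ?thesis
    using boundary_profit_le[OF assms(1) _ assms(3,4)]
      boundary_profit_bounded_capacity[OF assms(1) _ assms(3), of n x]
      boundary_profit_bounded_gap[OF assms]
    by meson
qed

lemma symmetric_optimum_zero:
  assumes "0 \<le> k" and "0 \<le> n" and "a \<le> 0"
  shows "symmetric_optimum a d k m n 0"
proof -
  have "deviation_profit a d k m n 0 t \<le> 0" if "0 \<le> t" for t
    using deviation_profit_le[OF assms(1,2) that, of a d m 0] assms(3) that
    by (smt (verit) mult_nonneg_nonpos)
  thus ?thesis by (simp add: symmetric_optimum_def deviation_profit_def)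
qed

lemma symmetric_optimum_interior:
  assumes "0 \<le> k" and "0 \<le> n" and "0 \<le> m" and "0 \<le> a" and "a \<le> (m + 1) * d"
  shows "symmetric_optimum a d k m n (a / (m + 1))" and "a - d \<le> m * (a / (m + 1))"
proof -
  define x where "x = a / (m + 1)"
  have a: "a = (m + 1) * x" using assms(3) by (simp add: x_def)
  hence "x \<le> d" using assms(3,5) by simp
  thus "a - d \<le> m * (a / (m + 1))" unfolding x_def[symmetric] using a by (simp add: algebra_simps)
  have "deviation_profit a d k m n x x = x * x"
    using deviation_profit_idle[OF assms(2), of a d m x x] a \<open>x \<le> d\<close> by (simp add: algebra_simps)
  moreover have "deviation_profit a d k m n x t \<le> x * x" if "0 \<le> t" for t
  proof -
    have "deviation_profit a d k m n x t \<le> t * (2 * x - t)"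
      using deviation_profit_le[OF assms(1,2) that, of a d m x] a by (simp add: algebra_simps)
    also have "\<dots> \<le> x * x" using zero_le_power2[of "t - x"] by (simp add: power2_eq_square algebra_simps)
    finally show ?thesis .
  qed
  moreover have "0 \<le> x" using assms(3,4) by (simp add: x_def)
  ultimately show "symmetric_optimum a d k m n (a / (m + 1))"
    unfolding symmetric_optimum_def x_def[symmetric] by simp
qed

lemma symmetric_optimum_boundary_iff:
  assumes "0 < d" and "1 \<le> n" and "0 < k" and "0 < m" and "(m + 1) * d \<le> a"
  shows "symmetric_optimum a d k m n ((a - d) / m) \<longleftrightarrow> a \<le> idle_threshold d k m n"
proof -
  define x where "x = (a - d) / m"
  have a: "a = m * x + d" using assms(4) by (simp add: x_def)
  have "m * (x - d) = a - (m + 1) * d" using a by (simp add: algebra_simps)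
  hence "0 \<le> m * (x - d)" using assms(5) by simp
  hence "d \<le> x" using assms(4) by (simp add: zero_le_mult_iff)
  have "symmetric_optimum a d k m n x
     \<longleftrightarrow> (\<forall>t\<ge>0. boundary_profit d k n x t \<le> x * d)"
  proof -
    have "boundary_profit d k n x x = x * d" by (simp add: boundary_profit_def clamp_def)
    thus ?thesis using \<open>d \<le> x\<close> assms(1)
      unfolding symmetric_optimum_def deviation_profit_boundary[OF a] by simp
  qed
  also have "\<dots> \<longleftrightarrow> x - d \<le> n * d \<and> x - d \<le> n * k + 2 * sqrt (n * k * d)"
    using boundary_profit_bounded_iff[OF assms(1-3) \<open>d \<le> x\<close>] .
  also have "\<dots> \<longleftrightarrow> m * (x - d) \<le> m * (n * d) \<and> m * (x - d) \<le> m * (n * k + 2 * sqrt (n * k * d))"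
    using assms(4) by simp
  also have "\<dots> \<longleftrightarrow> a \<le> idle_threshold d k m n"
    unfolding idle_threshold_def a by (auto simp: algebra_simps min_def)
  finally show ?thesis by (simp add: x_def)
qed

lemma idle_symmetric_optimum_le_threshold:
  assumes "0 < d" and "1 \<le> n" and "0 < k" and "0 < m"
    and opt: "symmetric_optimum a d k m n x" and idle: "a - d \<le> m * x"
  shows "a \<le> idle_threshold d k m n"
proof (cases "a \<le> (m + 1) * d")
  case True
  thus ?thesis using idle_threshold_ge[of d k m n] assms(1-4) by simp
next
  case False
  have "a - d = m * x"
  proof (rule ccontr)
    assume "a - d \<noteq> m * x"
    hence strict: "a - d < m * x" using idle by simp
    \<comment> \<open>Near \<open>x\<close> the followers stay idle, so the deviation profit is the parabola
      \<open>t (2p - t)\<close>, and the optimum \<open>x\<close> must be its vertex \<open>p\<close>.\<close>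
    define p where "p = (a - (m - 1) * x) / 2"
    define l where "l = max 0 (a - d - (m - 1) * x)"
    have "m * d < m * x" using False strict by (simp add: algebra_simps)
    hence "d < x" using assms(4) by simp
    hence "l < x" using strict assms(1) by (simp add: l_def algebra_simps)
    have profit: "deviation_profit a d k m n x t = t * (2 * p - t)" if "a - d - (m - 1) * x - t \<le> 0" for t
      using deviation_profit_idle[OF _ that] assms(2) by (simp add: p_def)
    have "t * (2 * p - t) \<le> x * (2 * p - x)" if "l \<le> t" for t
    proof -
      have "0 \<le> t" and "a - d - (m - 1) * x - t \<le> 0" using that by (auto simp: l_def)
      moreover have "a - d - (m - 1) * x - x \<le> 0" using strict by (simp add: algebra_simps)
      ultimately show ?thesis
        using opt profit[of t] profit[of x] unfolding symmetric_optimum_def by force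
    qed
    hence "x = p" by (rule parabola_vertex_eq[OF \<open>l < x\<close>])
    hence "a = (m + 1) * x" by (simp add: p_def algebra_simps)
    thus False using strict False \<open>d < x\<close> assms(4) by (simp add: algebra_simps)
  qed
  hence "x = (a - d) / m" using assms(4) by (simp add: field_simps)
  thus ?thesis using symmetric_optimum_boundary_iff[OF assms(1-4)] False opt by simp
qed

lemma idle_symmetric_optimum_exists_iff:
  assumes "0 < d" and "1 \<le> n" and "0 < k" and "1 \<le> m"
  shows "(\<exists>x. symmetric_optimum a d k m n x \<and> a - d \<le> m * x) \<longleftrightarrow> a \<le> idle_threshold d k m n"
proof
  assume "\<exists>x. symmetric_optimum a d k m n x \<and> a - d \<le> m * x"
  thus "a \<le> idle_threshold d k m n"
    using idle_symmetric_optimum_le_threshold[of d n k m a] assms by auto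
next
  assume a: "a \<le> idle_threshold d k m n"
  consider "a < 0" | "0 \<le> a" "a \<le> (m + 1) * d" | "(m + 1) * d \<le> a" by linarith
  thus "\<exists>x. symmetric_optimum a d k m n x \<and> a - d \<le> m * x"
  proof cases
    case 1
    thus ?thesis using symmetric_optimum_zero[of k n a d m] assms by force
  next
    case 2
    thus ?thesis using symmetric_optimum_interior[of k n m a d] assms by force
  next
    case 3
    thus ?thesis using symmetric_optimum_boundary_iff[of d n k m a] a assms by force
  qed
qed

theorem lemma8:
  fixes \<alpha> \<beta> C c k :: real and M N :: nat
  assumes "M \<ge> 1" and "N \<ge> 2" and "\<alpha> > 0" and "\<beta> > 0"
    and "c \<ge> C" and "C > 0" and "k > 0"
    and "(c - C) / \<beta> > 0"
  defines "\<alpha>x \<equiv> (\<alpha> - C) / \<beta>" and "dC \<equiv> (c - C) / \<beta>"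
  defines "\<zeta>1 \<equiv> (real M + 1) * dC
              + min (real M * real N * dC)
                    (real M * real N * k + 2 * real M * sqrt (real N * k * dC))"
  shows "((\<exists>x \<in> X0 \<alpha> \<beta> C c k M N. \<forall>j<N. spot_eq \<alpha> \<beta> c k M N (\<lambda>_. 0) (\<lambda>_. x) j = 0)
           \<longleftrightarrow> \<alpha>x \<le> \<zeta>1)
       \<and> (0 \<le> \<alpha>x \<and> \<alpha>x < (real M + 1) * dC \<longrightarrow>
           (let x = \<alpha>x / (real M + 1) in
              x \<in> X0 \<alpha> \<beta> C c k M N \<and> (\<forall>j<N. spot_eq \<alpha> \<beta> c k M N (\<lambda>_. 0) (\<lambda>_. x) j = 0)))
       \<and> ((real M + 1) * dC \<le> \<alpha>x \<and> \<alpha>x \<le> \<zeta>1 \<longrightarrow>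
           (let x = (\<alpha>x - dC) / real M in
              x \<in> X0 \<alpha> \<beta> C c k M N \<and> (\<forall>j<N. spot_eq \<alpha> \<beta> c k M N (\<lambda>_. 0) (\<lambda>_. x) j = 0)))"
proof -
  have M: "1 \<le> real M" and N: "1 \<le> real N" "0 < N" and dC: "0 < dC"
    using assms by (simp_all add: dC_def)
  have X0: "x \<in> X0 \<alpha> \<beta> C c k M N \<longleftrightarrow> symmetric_optimum \<alpha>x dC k (real M) (real N) x" for x
    unfolding \<alpha>x_def dC_def using assms by (intro mem_X0_iff) simp_all
  have idle: "(\<forall>j<N. spot_eq \<alpha> \<beta> c k M N (\<lambda>_. 0) (\<lambda>_. x) j = 0) \<longleftrightarrow> \<alpha>x - dC \<le> real M * x" for x
    unfolding \<alpha>x_def dC_def using assms N by (intro spot_eq_symmetric_idle_iff) simp_all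
  have \<zeta>1: "\<zeta>1 = idle_threshold dC k (real M) (real N)"
    by (simp add: \<zeta>1_def idle_threshold_def)
  show ?thesis
    unfolding Let_def X0 idle \<zeta>1 Bex_def
    using idle_symmetric_optimum_exists_iff[OF dC N(1) assms(7) M, of \<alpha>x]
      symmetric_optimum_interior[of k "real N" "real M" \<alpha>x dC]
      symmetric_optimum_boundary_iff[OF dC N(1) assms(7), of "real M" \<alpha>x] M assms(7)
    by auto
qed

end
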